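(* Let $(X,S)$ be an association scheme, fix $x\in X$, and let $K$ be a field of positive characteristic $p$. Suppose that $p$ divides the valency $n_s$ for some $s\in S$. Then the Terwilliger algebra $KT(x)$ is not semisimple.
   Context: An association scheme $(X,S)$ consists of a finite set $X$ and a partition $S$ of $X\times X$ such that: (1) $1:=\{(x,x)\mid x\in X\}\in S$; (2) for $s\in S$, $s^*:=\{(y,x)\mid (x,y)\in s\}\in S$; (3) for $s,t,u\in S$ there is a nonnegative integer $p_{st}^u$ with $p_{st}^u=|xs\cap ty|$ whenever $(x,y)\in u$, where $xs=\{y\mid (x,y)\in s\}$ and $ty=\{z\mid (z,y)\in t\}$. The valency of $s\in S$ is $n_s:=p_{ss^*}^1=|xs|$ (independent of $x$). For $s\subseteq X\times X$ the adjacency matrix $\sigma_s$ has $(y,z)$-entry $1$ if $(y,z)\in s$ and $0$ otherwise. Fixing $x\in X$, for $s\in S$ let $E_s^*$ be the diagonal $0/1$ matrix whose $(y,y)$-entry is $1$ iff $y\in xs$. For a field $K$, $KT(x)$ is the $K$-subalgebra of $\mathrm{M}_X(K)$ generated by $\{E_s^*\sigma_tE_u^*\mid s,t,u\in S\}$ (matrices regarded over $K$). *)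

theory Defs
  imports Main
begin

text \<open>Matrices indexed by X over K are represented as functions 'a => 'a => 'k
  (entries outside X x X are irrelevant / zero for all matrices considered).\<close>

definition assoc_scheme :: "'a set \<Rightarrow> ('a \<times> 'a) set set \<Rightarrow> bool" where
  "assoc_scheme X S \<longleftrightarrow>
     finite X \<and>
     (\<forall>s\<in>S. s \<noteq> {}) \<and> \<Union>S = X \<times> X \<and>
     (\<forall>s\<in>S. \<forall>t\<in>S. s \<noteq> t \<longrightarrow> s \<inter> t = {}) \<and>
     Id_on X \<in> S \<and>
     (\<forall>s\<in>S. converse s \<in> S) \<and>
     (\<forall>s\<in>S. \<forall>t\<in>S. \<forall>u\<in>S. \<exists>c::nat. \<forall>x y. (x, y) \<in> u \<longrightarrow>
        card {z. (x, z) \<in> s \<and> (z, y) \<in> t} = c)"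

definition int_number :: "('a \<times> 'a) set \<Rightarrow> ('a \<times> 'a) set \<Rightarrow> ('a \<times> 'a) set \<Rightarrow> nat" where
  "int_number s t u = (let (x, y) = (SOME p. p \<in> u) in card {z. (x, z) \<in> s \<and> (z, y) \<in> t})"

definition valency :: "'a set \<Rightarrow> ('a \<times> 'a) set \<Rightarrow> nat" where
  "valency X s = int_number s (converse s) (Id_on X)"

definition mmult :: "'a set \<Rightarrow> ('a \<Rightarrow> 'a \<Rightarrow> 'k::field) \<Rightarrow> ('a \<Rightarrow> 'a \<Rightarrow> 'k) \<Rightarrow> ('a \<Rightarrow> 'a \<Rightarrow> 'k)" where
  "mmult X A B = (\<lambda>y z. \<Sum>w\<in>X. A y w * B w z)"

definition mone :: "'a set \<Rightarrow> ('a \<Rightarrow> 'a \<Rightarrow> 'k::field)" where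
  "mone X = (\<lambda>y z. if y = z \<and> y \<in> X then 1 else 0)"

definition adj_mat :: "('a \<times> 'a) set \<Rightarrow> ('a \<Rightarrow> 'a \<Rightarrow> 'k::field)" where
  "adj_mat s = (\<lambda>y z. if (y, z) \<in> s then 1 else 0)"

definition dual_idem :: "'a \<Rightarrow> ('a \<times> 'a) set \<Rightarrow> ('a \<Rightarrow> 'a \<Rightarrow> 'k::field)" where
  "dual_idem x s = (\<lambda>y z. if y = z \<and> (x, y) \<in> s then 1 else 0)"

inductive_set terwilliger :: "'a set \<Rightarrow> ('a \<times> 'a) set set \<Rightarrow> 'a \<Rightarrow> ('a \<Rightarrow> 'a \<Rightarrow> 'k::field) set"
  for X S x where
  gen: "s \<in> S \<Longrightarrow> t \<in> S \<Longrightarrow> u \<in> S \<Longrightarrow>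
          mmult X (mmult X (dual_idem x s) (adj_mat t)) (dual_idem x u) \<in> terwilliger X S x"
| one: "mone X \<in> terwilliger X S x"
| add: "A \<in> terwilliger X S x \<Longrightarrow> B \<in> terwilliger X S x \<Longrightarrow> (\<lambda>y z. A y z + B y z) \<in> terwilliger X S x"
| smult: "A \<in> terwilliger X S x \<Longrightarrow> (\<lambda>y z. c * A y z) \<in> terwilliger X S x"
| mult: "A \<in> terwilliger X S x \<Longrightarrow> B \<in> terwilliger X S x \<Longrightarrow> mmult X A B \<in> terwilliger X S x"

definition mat_ideal :: "'a set \<Rightarrow> ('a \<Rightarrow> 'a \<Rightarrow> 'k::field) set \<Rightarrow> ('a \<Rightarrow> 'a \<Rightarrow> 'k) set \<Rightarrow> bool" where
  "mat_ideal X A I \<longleftrightarrow> I \<subseteq> A \<and> (\<lambda>y z. 0) \<in> I \<and>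
     (\<forall>a\<in>I. \<forall>b\<in>I. (\<lambda>y z. a y z + b y z) \<in> I) \<and>
     (\<forall>a\<in>I. \<forall>c. (\<lambda>y z. c * a y z) \<in> I) \<and>
     (\<forall>a\<in>A. \<forall>b\<in>I. mmult X a b \<in> I \<and> mmult X b a \<in> I)"

definition mat_nilpotent :: "'a set \<Rightarrow> ('a \<Rightarrow> 'a \<Rightarrow> 'k::field) set \<Rightarrow> bool" where
  "mat_nilpotent X I \<longleftrightarrow> (\<exists>n\<ge>1. \<forall>as. length as = n \<and> set as \<subseteq> I \<longrightarrow>
      (\<forall>y\<in>X. \<forall>z\<in>X. foldr (mmult X) as (mone X) y z = 0))"

text \<open>A finite-dimensional algebra is semisimple iff its (Jacobson) radical, which is the
  largest nilpotent ideal, is zero, i.e. iff it has no nonzero nilpotent two-sided ideal.\<close>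
definition mat_semisimple :: "'a set \<Rightarrow> ('a \<Rightarrow> 'a \<Rightarrow> 'k::field) set \<Rightarrow> bool" where
  "mat_semisimple X A \<longleftrightarrow>
     \<not> (\<exists>I. mat_ideal X A I \<and> mat_nilpotent X I \<and> (\<exists>a\<in>I. \<exists>y\<in>X. \<exists>z\<in>X. a y z \<noteq> 0))"

end

theory Submission
  imports Defs
begin

text \<open>
  Write \<open>e\<^sub>x\<close> for the unit vector at the base point and \<open>v\<^sub>s\<close> for the
  characteristic vector of the subconstituent \<open>xs\<close>. For every \<open>C \<in> KT(x)\<close> the row
  \<open>e\<^sub>x\<^sup>T C\<close> is constant on each subconstituent: row vectors with this property
  form a space containing \<open>e\<^sub>x\<close> that is stable under right multiplication by the
  generators \<open>E\<^sub>a\<^sup>* \<sigma>\<^sub>b E\<^sub>c\<^sup>*\<close>, because the entries that occur are intersection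
  numbers \<open>p\<^sub>a\<^sub>b\<^sup>c\<close>. Summing this row over \<open>xs\<close> gives \<open>e\<^sub>x\<^sup>T C v\<^sub>s = n\<^sub>s c\<close>,
  with \<open>c\<close> its value on \<open>xs\<close>, which vanishes when \<open>p\<close> divides \<open>n\<^sub>s\<close>. The
  nonzero rank-one matrix \<open>v\<^sub>s e\<^sub>x\<^sup>T = E\<^sub>s\<^sup>* \<sigma>\<^sub>s\<^sub>* E\<^sub>1\<^sup>*\<close> lies in \<open>KT(x)\<close>,
  and as \<open>e\<^sub>x\<^sup>T KT(x) v\<^sub>s = 0\<close> the ideal it generates has square zero,
  so the radical of \<open>KT(x)\<close> is nonzero.
\<close>

definition mat_vec :: "'a set \<Rightarrow> ('a \<Rightarrow> 'a \<Rightarrow> 'k::field) \<Rightarrow> ('a \<Rightarrow> 'k) \<Rightarrow> 'a \<Rightarrow> 'k" where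
  "mat_vec X M v = (\<lambda>y. \<Sum>t\<in>X. M y t * v t)"

definition vec_mat :: "'a set \<Rightarrow> ('a \<Rightarrow> 'k::field) \<Rightarrow> ('a \<Rightarrow> 'a \<Rightarrow> 'k) \<Rightarrow> 'a \<Rightarrow> 'k" where
  "vec_mat X w M = (\<lambda>z. \<Sum>t\<in>X. w t * M t z)"

definition mtrans :: "('a \<Rightarrow> 'a \<Rightarrow> 'k) \<Rightarrow> 'a \<Rightarrow> 'a \<Rightarrow> 'k" where
  "mtrans M = (\<lambda>y z. M z y)"

lemma sum_vec_mat_mult: "(\<Sum>t\<in>X. vec_mat X w M t * u t) = (\<Sum>y\<in>X. w y * mat_vec X M u y)"
  unfolding vec_mat_def mat_vec_def
  by (simp add: sum_distrib_left sum_distrib_right mult.assoc)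
    (rule sum.swap)

lemma mat_vec_mmult: "mat_vec X (mmult X A B) v y = mat_vec X A (mat_vec X B v) y"
  unfolding mat_vec_def mmult_def
  by (simp add: sum_distrib_left sum_distrib_right mult.assoc)
    (rule sum.swap)

lemma vec_mat_mmult: "vec_mat X w (mmult X A B) = vec_mat X (vec_mat X w A) B"
  unfolding vec_mat_def mmult_def
  by (rule ext, simp add: sum_distrib_left sum_distrib_right mult.assoc, rule sum.swap)

lemma mat_vec_lincomb:
  "mat_vec X (\<lambda>y z. \<Sum>i\<in>F. c i * B i y z) v y = (\<Sum>i\<in>F. c i * mat_vec X (B i) v y)"
  unfolding mat_vec_def
  by (simp add: sum_distrib_left sum_distrib_right mult.assoc)
    (rule sum.swap)

lemma vec_mat_add: "vec_mat X w (\<lambda>y z. A y z + B y z) = (\<lambda>z. vec_mat X w A z + vec_mat X w B z)"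
  unfolding vec_mat_def by (simp add: distrib_left sum.distrib)

lemma vec_mat_smult: "vec_mat X w (\<lambda>y z. c * A y z) = (\<lambda>z. c * vec_mat X w A z)"
  unfolding vec_mat_def by (simp add: mult.left_commute[of _ c] sum_distrib_left)

lemma mat_vec_mtrans: "mat_vec X (mtrans M) w = vec_mat X w M"
  unfolding mat_vec_def vec_mat_def mtrans_def by (simp add: mult.commute)

lemma mtrans_mmult: "mtrans (mmult X A B) = mmult X (mtrans B) (mtrans A)"
  unfolding mtrans_def mmult_def by (simp add: mult.commute)

lemma mtrans_mone: "mtrans (mone X) = mone X"
  unfolding mtrans_def mone_def by (auto intro!: ext)

lemma mmult_mone_right: "finite X \<Longrightarrow> z \<in> X \<Longrightarrow> mmult X M (mone X) y z = M y z"
  unfolding mmult_def mone_def by (simp add: if_distrib[of "(*) _"] cong: conj_cong if_cong)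

lemma mat_vec_mone: "finite X \<Longrightarrow> y \<in> X \<Longrightarrow> mat_vec X (mone X) v y = v y"
  unfolding mat_vec_def mone_def by (simp add: eq_commute[of y] if_distrib[of "\<lambda>a. a * _"] cong: if_cong)

lemma vec_mat_mone: "finite X \<Longrightarrow> z \<in> X \<Longrightarrow> vec_mat X w (mone X) z = w z"
  unfolding vec_mat_def mone_def by (simp add: if_distrib[of "(*) _"] cong: conj_cong if_cong)

definition mat_cols_in :: "'a set \<Rightarrow> ('a \<Rightarrow> 'a \<Rightarrow> 'k::field) set \<Rightarrow> ('a \<Rightarrow> 'k) \<Rightarrow> ('a \<Rightarrow> 'a \<Rightarrow> 'k) \<Rightarrow> bool" where
  "mat_cols_in X A v M \<longleftrightarrow> (\<forall>z\<in>X. \<exists>C\<in>A. \<forall>y\<in>X. M y z = mat_vec X C v y)"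

definition mat_rows_in :: "'a set \<Rightarrow> ('a \<Rightarrow> 'a \<Rightarrow> 'k::field) set \<Rightarrow> ('a \<Rightarrow> 'k) \<Rightarrow> ('a \<Rightarrow> 'a \<Rightarrow> 'k) \<Rightarrow> bool" where
  "mat_rows_in X A w M \<longleftrightarrow> (\<forall>y\<in>X. \<exists>B\<in>A. \<forall>z\<in>X. M y z = vec_mat X w B z)"

locale mat_algebra =
  fixes X :: "'a set" and A :: "('a \<Rightarrow> 'a \<Rightarrow> 'k::field) set"
  assumes finite_X: "finite X"
    and mone_mem: "mone X \<in> A"
    and add_mem: "a \<in> A \<Longrightarrow> b \<in> A \<Longrightarrow> (\<lambda>y z. a y z + b y z) \<in> A"
    and smult_mem: "a \<in> A \<Longrightarrow> (\<lambda>y z. c * a y z) \<in> A"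
    and mmult_mem: "a \<in> A \<Longrightarrow> b \<in> A \<Longrightarrow> mmult X a b \<in> A"
begin

lemma zero_mem: "(\<lambda>y z. 0) \<in> A"
  using smult_mem[OF mone_mem, of 0] by simp

lemma lincomb_mem:
  "finite F \<Longrightarrow> (\<And>i. i \<in> F \<Longrightarrow> B i \<in> A) \<Longrightarrow> (\<lambda>y z. \<Sum>i\<in>F. c i * B i y z) \<in> A"
proof (induction F rule: finite_induct)
  case empty
  then show ?case using zero_mem by simp
next
  case (insert i F)
  then show ?case using add_mem[OF smult_mem[of "B i" "c i"] insert.IH] by simp
qed

lemma cols_in_zero: "mat_cols_in X A v (\<lambda>y z. 0)"
  unfolding mat_cols_in_def mat_vec_def by (auto intro!: bexI[OF _ zero_mem])

lemma cols_in_add: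
  assumes "mat_cols_in X A v M" "mat_cols_in X A v M'"
  shows "mat_cols_in X A v (\<lambda>y z. M y z + M' y z)"
  unfolding mat_cols_in_def
proof
  fix z assume "z \<in> X"
  obtain C where "C \<in> A" "\<forall>y\<in>X. M y z = mat_vec X C v y"
    using assms(1) \<open>z \<in> X\<close> unfolding mat_cols_in_def by blast
  moreover obtain C' where "C' \<in> A" "\<forall>y\<in>X. M' y z = mat_vec X C' v y"
    using assms(2) \<open>z \<in> X\<close> unfolding mat_cols_in_def by blast
  ultimately show "\<exists>D\<in>A. \<forall>y\<in>X. M y z + M' y z = mat_vec X D v y"
    by (intro bexI[of _ "\<lambda>y z. C y z + C' y z"] add_mem)
      (auto simp: mat_vec_def sum.distrib distrib_right)
qed

lemma cols_in_smult:
  assumes "mat_cols_in X A v M"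
  shows "mat_cols_in X A v (\<lambda>y z. c * M y z)"
  unfolding mat_cols_in_def
proof
  fix z assume "z \<in> X"
  then obtain C where "C \<in> A" "\<forall>y\<in>X. M y z = mat_vec X C v y"
    using assms unfolding mat_cols_in_def by meson
  then show "\<exists>D\<in>A. \<forall>y\<in>X. c * M y z = mat_vec X D v y"
    by (intro bexI[of _ "\<lambda>y z. c * C y z"] smult_mem)
      (auto simp: mat_vec_def sum_distrib_left mult.assoc)
qed

lemma cols_in_mmult_left:
  assumes "N \<in> A" "mat_cols_in X A v M"
  shows "mat_cols_in X A v (mmult X N M)"
  unfolding mat_cols_in_def
proof
  fix z assume "z \<in> X"
  then obtain C where "C \<in> A" and C: "\<forall>y\<in>X. M y z = mat_vec X C v y"
    using assms unfolding mat_cols_in_def by meson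
  moreover have "mmult X N M y z = mat_vec X N (mat_vec X C v) y" if "y \<in> X" for y
    using C unfolding mmult_def mat_vec_def by simp
  ultimately show "\<exists>D\<in>A. \<forall>y\<in>X. mmult X N M y z = mat_vec X D v y"
    using assms(1) by (intro bexI[of _ "mmult X N C"] mmult_mem) (auto simp: mat_vec_mmult)
qed

lemma cols_in_mmult_right:
  assumes "mat_cols_in X A v M"
  shows "mat_cols_in X A v (mmult X M N)"
  unfolding mat_cols_in_def
proof
  fix z assume "z \<in> X"
  from assms obtain C where C: "\<And>t. t \<in> X \<Longrightarrow> C t \<in> A \<and> (\<forall>y\<in>X. M y t = mat_vec X (C t) v y)"
    unfolding mat_cols_in_def by metis
  have "mmult X M N y z = mat_vec X (\<lambda>y' z'. \<Sum>t\<in>X. N t z * C t y' z') v y" if "y \<in> X" for y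
    using C that by (simp add: mat_vec_lincomb mmult_def mult.commute)
  moreover have "(\<lambda>y' z'. \<Sum>t\<in>X. N t z * C t y' z') \<in> A"
    using C by (intro lincomb_mem finite_X) blast
  ultimately show "\<exists>D\<in>A. \<forall>y\<in>X. mmult X M N y z = mat_vec X D v y"
    by blast
qed

lemma mat_algebra_mtrans: "mat_algebra X (mtrans ` A)"
proof
  show "mone X \<in> mtrans ` A"
    using mone_mem mtrans_mone by (metis image_eqI)
  fix a b c assume "a \<in> mtrans ` A" "b \<in> mtrans ` A"
  then obtain a' b' where "a' \<in> A" "b' \<in> A" and ab: "a = mtrans a'" "b = mtrans b'"
    by blast
  show "(\<lambda>y z. a y z + b y z) \<in> mtrans ` A"
    using add_mem[OF \<open>a' \<in> A\<close> \<open>b' \<in> A\<close>] unfolding ab by (force simp: mtrans_def)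
  show "(\<lambda>y z. c * a y z) \<in> mtrans ` A"
    using smult_mem[OF \<open>a' \<in> A\<close>, of c] unfolding ab by (force simp: mtrans_def)
  show "mmult X a b \<in> mtrans ` A"
    using mmult_mem[OF \<open>b' \<in> A\<close> \<open>a' \<in> A\<close>] unfolding ab mtrans_mmult[symmetric] by blast
qed (rule finite_X)

end

lemma mat_rows_in_iff_cols_in_mtrans:
  "mat_rows_in X A w M \<longleftrightarrow> mat_cols_in X (mtrans ` A) w (mtrans M)"
  unfolding mat_rows_in_def mat_cols_in_def by (auto simp: mat_vec_mtrans mtrans_def[of M])

text \<open>
  When \<open>v w\<^sup>T \<in> A\<close> and \<open>w\<^sup>T A v = 0\<close>, this set contains the ideal generated by
  \<open>v w\<^sup>T\<close> and has square zero; describing it through columns and rows avoids linear spans.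
\<close>

definition cols_rows_ideal ::
    "'a set \<Rightarrow> ('a \<Rightarrow> 'a \<Rightarrow> 'k::field) set \<Rightarrow> ('a \<Rightarrow> 'k) \<Rightarrow> ('a \<Rightarrow> 'k) \<Rightarrow> ('a \<Rightarrow> 'a \<Rightarrow> 'k) set" where
  "cols_rows_ideal X A v w = {M \<in> A. mat_cols_in X A v M \<and> mat_rows_in X A w M}"

context mat_algebra
begin

lemma mat_ideal_cols_rows_ideal: "mat_ideal X A (cols_rows_ideal X A v w)"
proof -
  interpret T: mat_algebra X "mtrans ` A" by (rule mat_algebra_mtrans)
  have rows_zero: "mat_rows_in X A w (\<lambda>y z. 0)"
    using T.cols_in_zero by (simp add: mat_rows_in_iff_cols_in_mtrans mtrans_def)
  have rows_add: "mat_rows_in X A w (\<lambda>y z. M y z + M' y z)"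
    if "mat_rows_in X A w M" "mat_rows_in X A w M'" for M M'
    using T.cols_in_add that by (simp add: mat_rows_in_iff_cols_in_mtrans mtrans_def)
  have rows_smult: "mat_rows_in X A w (\<lambda>y z. c * M y z)" if "mat_rows_in X A w M" for M c
    using T.cols_in_smult that by (simp add: mat_rows_in_iff_cols_in_mtrans mtrans_def)
  have rows_mmult_left: "mat_rows_in X A w (mmult X N M)" if "mat_rows_in X A w M" for M N
    using T.cols_in_mmult_right that by (simp add: mat_rows_in_iff_cols_in_mtrans mtrans_mmult)
  have rows_mmult_right: "mat_rows_in X A w (mmult X M N)" if "mat_rows_in X A w M" "N \<in> A" for M N
    using T.cols_in_mmult_left that by (simp add: mat_rows_in_iff_cols_in_mtrans mtrans_mmult)
  show ?thesis
    unfolding mat_ideal_def cols_rows_ideal_def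
    by (auto intro: zero_mem add_mem smult_mem mmult_mem cols_in_zero cols_in_add cols_in_smult
        cols_in_mmult_left cols_in_mmult_right rows_zero rows_add rows_smult rows_mmult_left
        rows_mmult_right)
qed

lemma cols_rows_ideal_mmult_eq_0:
  assumes orth: "\<And>C. C \<in> A \<Longrightarrow> (\<Sum>t\<in>X. w t * mat_vec X C v t) = 0"
    and "M \<in> cols_rows_ideal X A v w" "M' \<in> cols_rows_ideal X A v w" "y \<in> X" "z \<in> X"
  shows "mmult X M M' y z = 0"
proof -
  obtain B where "B \<in> A" and B: "\<forall>t\<in>X. M y t = vec_mat X w B t"
    using assms(2,4) unfolding cols_rows_ideal_def mat_rows_in_def by blast
  obtain C where "C \<in> A" and C: "\<forall>t\<in>X. M' t z = mat_vec X C v t"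
    using assms(3,5) unfolding cols_rows_ideal_def mat_cols_in_def by blast
  have "mmult X M M' y z = (\<Sum>t\<in>X. vec_mat X w B t * mat_vec X C v t)"
    unfolding mmult_def using B C by simp
  also have "\<dots> = (\<Sum>t\<in>X. w t * mat_vec X (mmult X B C) v t)"
    by (simp add: sum_vec_mat_mult mat_vec_mmult)
  also have "\<dots> = 0"
    using orth mmult_mem[OF \<open>B \<in> A\<close> \<open>C \<in> A\<close>] .
  finally show ?thesis .
qed

lemma mat_nilpotent_cols_rows_ideal:
  assumes "\<And>C. C \<in> A \<Longrightarrow> (\<Sum>t\<in>X. w t * mat_vec X C v t) = 0"
  shows "mat_nilpotent X (cols_rows_ideal X A v w)"
  unfolding mat_nilpotent_def
proof (intro exI[of _ 2] conjI allI impI ballI)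
  fix Ms y z assume Ms: "length Ms = 2 \<and> set Ms \<subseteq> cols_rows_ideal X A v w" and "y \<in> X" "z \<in> X"
  moreover from Ms obtain M M' where "Ms = [M, M']"
    by (auto simp: numeral_2_eq_2 length_Suc_conv)
  ultimately show "foldr (mmult X) Ms (mone X) y z = 0"
    using cols_rows_ideal_mmult_eq_0[OF assms, of M M' y z]
    by (simp add: mmult_def[of X M] mmult_mone_right finite_X)
qed simp

lemma rank_one_mem_cols_rows_ideal:
  assumes "(\<lambda>y z. v y * w z) \<in> A"
  shows "(\<lambda>y z. v y * w z) \<in> cols_rows_ideal X A v w"
proof -
  have "mat_cols_in X A v (\<lambda>y z. v y * w z)"
    unfolding mat_cols_in_def
  proof
    fix z
    have "v y * w z = mat_vec X (\<lambda>a b. w z * mone X a b) v y" if "y \<in> X" for y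
      using mat_vec_mone[OF finite_X that, of v]
      by (simp add: mat_vec_def sum_distrib_left[symmetric] mult.assoc mult.commute[of "v y"])
    then show "\<exists>C\<in>A. \<forall>y\<in>X. v y * w z = mat_vec X C v y"
      using smult_mem[OF mone_mem] by blast
  qed
  moreover have "mat_rows_in X A w (\<lambda>y z. v y * w z)"
    unfolding mat_rows_in_def
  proof
    fix y
    have "v y * w z = vec_mat X w (\<lambda>a b. v y * mone X a b) z" if "z \<in> X" for z
      using vec_mat_mone[OF finite_X that, of w]
      by (simp add: vec_mat_def sum_distrib_left[symmetric] mult.left_commute)
    then show "\<exists>B\<in>A. \<forall>z\<in>X. v y * w z = vec_mat X w B z"
      using smult_mem[OF mone_mem] by blast
  qed
  ultimately show ?thesis
    using assms unfolding cols_rows_ideal_def by blast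
qed

theorem not_mat_semisimple_if_rank_one_orth:
  assumes "(\<lambda>y z. v y * w z) \<in> A"
    and "y \<in> X" "v y \<noteq> 0" "z \<in> X" "w z \<noteq> 0"
    and "\<And>C. C \<in> A \<Longrightarrow> (\<Sum>t\<in>X. w t * mat_vec X C v t) = 0"
  shows "\<not> mat_semisimple X A"
  unfolding mat_semisimple_def
  using mat_ideal_cols_rows_ideal mat_nilpotent_cols_rows_ideal[OF assms(6)]
    rank_one_mem_cols_rows_ideal[OF assms(1)] assms(2-5)
  by fastforce

end

context
  fixes X :: "'a set" and S :: "('a \<times> 'a) set set"
  assumes scheme: "assoc_scheme X S"
begin

lemma scheme_finite: "finite X"
  using scheme unfolding assoc_scheme_def by blast

lemma scheme_rel_subset: "s \<in> S \<Longrightarrow> s \<subseteq> X \<times> X"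
  using scheme unfolding assoc_scheme_def by blast

lemma scheme_rel_eqI: "s \<in> S \<Longrightarrow> t \<in> S \<Longrightarrow> p \<in> s \<Longrightarrow> p \<in> t \<Longrightarrow> s = t"
  using scheme unfolding assoc_scheme_def by blast

lemma scheme_Id_on: "Id_on X \<in> S"
  using scheme unfolding assoc_scheme_def by blast

lemma scheme_converse: "s \<in> S \<Longrightarrow> converse s \<in> S"
  using scheme unfolding assoc_scheme_def by blast

lemma scheme_rel_nonempty: "s \<in> S \<Longrightarrow> s \<noteq> {}"
  using scheme unfolding assoc_scheme_def by (elim conjE) (erule bspec)

lemma scheme_card_eq:
  assumes "s \<in> S" "t \<in> S" "u \<in> S" "(y, z) \<in> u" "(y', z') \<in> u"
  shows "card {w. (y, w) \<in> s \<and> (w, z) \<in> t} = card {w. (y', w) \<in> s \<and> (w, z') \<in> t}"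
proof -
  obtain c where "\<forall>y z. (y, z) \<in> u \<longrightarrow> card {w. (y, w) \<in> s \<and> (w, z) \<in> t} = c"
    using scheme assms(1-3) unfolding assoc_scheme_def by meson
  then show ?thesis
    using assms(4,5) by simp
qed

lemma card_eq_valency:
  assumes "s \<in> S" "y \<in> X"
  shows "card {z. (y, z) \<in> s} = valency X s"
proof -
  obtain a b where ab: "(SOME p. p \<in> Id_on X) = (a, b)"
    by fastforce
  have "(a, b) \<in> Id_on X"
    using someI[of "\<lambda>p. p \<in> Id_on X" "(y, y)"] assms(2) unfolding ab by blast
  then have "valency X s = card {z. (y, z) \<in> s \<and> (z, y) \<in> converse s}"
    unfolding valency_def int_number_def ab
    using scheme_card_eq[OF assms(1) scheme_converse[OF assms(1)] scheme_Id_on _ Id_onI[OF assms(2)]]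
    by simp
  then show ?thesis
    by simp
qed

lemma valency_pos: "s \<in> S \<Longrightarrow> 0 < valency X s"
proof -
  assume "s \<in> S"
  then obtain y z where "(y, z) \<in> s" "y \<in> X"
    using scheme_rel_nonempty scheme_rel_subset by fast
  moreover have "finite {z. (y, z) \<in> s}"
    using scheme_rel_subset[OF \<open>s \<in> S\<close>] scheme_finite
    by (auto intro: finite_subset[of _ X])
  ultimately show ?thesis
    using card_eq_valency[OF \<open>s \<in> S\<close>] card_gt_0_iff by fastforce
qed

end

lemma mmult_dual_idem_left:
  "finite X \<Longrightarrow> mmult X (dual_idem x s) M y z = (if y \<in> X \<and> (x, y) \<in> s then M y z else 0)"
  unfolding mmult_def dual_idem_def
  by (auto simp: eq_commute[of y] if_distrib[of "\<lambda>u. u * _"] cong: if_cong conj_cong intro: sum.neutral)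

lemma mmult_dual_idem_right:
  "finite X \<Longrightarrow> mmult X M (dual_idem x s) y z = (if z \<in> X \<and> (x, z) \<in> s then M y z else 0)"
  unfolding mmult_def dual_idem_def
  by (auto simp: if_distrib[of "(*) _"] cong: if_cong conj_cong intro: sum.neutral)

lemma dual_idem_adj_mat_dual_idem:
  assumes "finite X"
  shows "mmult X (mmult X (dual_idem x a) (adj_mat b)) (dual_idem x c) y z =
    of_bool (y \<in> X \<and> z \<in> X \<and> (x, y) \<in> a \<and> (y, z) \<in> b \<and> (x, z) \<in> c)"
  using assms by (auto simp: mmult_dual_idem_left mmult_dual_idem_right adj_mat_def)

definition const_on_subconstituents :: "('a \<times> 'a) set set \<Rightarrow> 'a \<Rightarrow> ('a \<Rightarrow> 'k) \<Rightarrow> bool" where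
  "const_on_subconstituents S x f \<longleftrightarrow>
     (\<forall>c\<in>S. \<forall>z z'. (x, z) \<in> c \<longrightarrow> (x, z') \<in> c \<longrightarrow> f z = f z')"

lemma const_on_subconstituents_add:
  "const_on_subconstituents S x f \<Longrightarrow> const_on_subconstituents S x g \<Longrightarrow>
    const_on_subconstituents S x (\<lambda>z. f z + g z)"
  unfolding const_on_subconstituents_def by metis

lemma const_on_subconstituents_smult:
  "const_on_subconstituents S x f \<Longrightarrow> const_on_subconstituents S x (\<lambda>z. c * f z)"
  unfolding const_on_subconstituents_def by metis

lemma sum_const_on_subconstituent:
  assumes "const_on_subconstituents S x f" "a \<in> S" "(x, y) \<in> a" "W \<subseteq> {w. (x, w) \<in> a}"
  shows "sum f W = of_nat (card W) * f y"
proof -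
  have "sum f W = sum (\<lambda>_. f y) W"
    using assms unfolding const_on_subconstituents_def by (intro sum.cong) blast+
  then show ?thesis
    by simp
qed

context
  fixes X :: "'a set" and S :: "('a \<times> 'a) set set"
  assumes scheme: "assoc_scheme X S"
begin

lemma vec_mat_dual_idem_adj_mat_const:
  assumes "a \<in> S" "b \<in> S" "c \<in> S" and f: "const_on_subconstituents S x f"
  shows "const_on_subconstituents S x
    (vec_mat X f (mmult X (mmult X (dual_idem x a) (adj_mat b)) (dual_idem x c)))"
  unfolding const_on_subconstituents_def
proof (intro ballI allI impI)
  fix d z z' assume "d \<in> S" "(x, z) \<in> d" "(x, z') \<in> d"
  define N where "N z = {y. (x, y) \<in> a \<and> (y, z) \<in> b}" for z
  have entry: "vec_mat X f (mmult X (mmult X (dual_idem x a) (adj_mat b)) (dual_idem x c)) z =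
      of_bool ((x, z) \<in> c) * sum f (N z)" if "z \<in> X" for z
  proof -
    have "N z = {y \<in> X. (x, y) \<in> a \<and> (y, z) \<in> b}"
      using scheme_rel_subset[OF scheme \<open>a \<in> S\<close>] unfolding N_def by blast
    then show ?thesis
      using that scheme_finite[OF scheme]
      by (simp add: vec_mat_def dual_idem_adj_mat_dual_idem sum.inter_filter sum.inter_restrict sum_distrib_right
          cong: conj_cong)
  qed
  have "sum f (N z) = sum f (N z')" if "d = c"
  proof (cases "\<exists>y. (x, y) \<in> a")
    case True
    then obtain y where "(x, y) \<in> a" ..
    then have "sum f (N w) = of_nat (card (N w)) * f y" for w
      by (rule sum_const_on_subconstituent[OF f \<open>a \<in> S\<close>]) (auto simp: N_def)
    moreover have "card (N z) = card (N z')"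
      unfolding N_def using scheme_card_eq[OF scheme \<open>a \<in> S\<close> \<open>b \<in> S\<close> \<open>c \<in> S\<close>] that
        \<open>(x, z) \<in> d\<close> \<open>(x, z') \<in> d\<close> by blast
    ultimately show ?thesis
      by simp
  next
    case False
    then show ?thesis
      unfolding N_def by simp
  qed
  moreover have "(x, z) \<in> c \<longleftrightarrow> d = c" "(x, z') \<in> c \<longleftrightarrow> d = c"
    using scheme_rel_eqI[OF scheme \<open>d \<in> S\<close> \<open>c \<in> S\<close>] \<open>(x, z) \<in> d\<close> \<open>(x, z') \<in> d\<close> by blast+
  moreover have "z \<in> X" "z' \<in> X"
    using scheme_rel_subset[OF scheme \<open>d \<in> S\<close>] \<open>(x, z) \<in> d\<close> \<open>(x, z') \<in> d\<close> by blast+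
  ultimately show "vec_mat X f (mmult X (mmult X (dual_idem x a) (adj_mat b)) (dual_idem x c)) z =
      vec_mat X f (mmult X (mmult X (dual_idem x a) (adj_mat b)) (dual_idem x c)) z'"
    by (simp add: entry)
qed

lemma vec_mat_terwilliger_const:
  assumes "C \<in> terwilliger X S x" "const_on_subconstituents S x f"
  shows "const_on_subconstituents S x (vec_mat X f C)"
  using assms
proof (induction arbitrary: f rule: terwilliger.induct)
  case (gen a b c)
  then show ?case
    by (rule vec_mat_dual_idem_adj_mat_const)
next
  case one
  show ?case
    unfolding const_on_subconstituents_def
  proof (intro ballI allI impI)
    fix c z z' assume "c \<in> S" "(x, z) \<in> c" "(x, z') \<in> c"
    then have "f z = f z'"
      using one unfolding const_on_subconstituents_def by blast
    moreover have "z \<in> X" "z' \<in> X"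
      using scheme_rel_subset[OF scheme \<open>c \<in> S\<close>] \<open>(x, z) \<in> c\<close> \<open>(x, z') \<in> c\<close> by blast+
    ultimately show "vec_mat X f (mone X) z = vec_mat X f (mone X) z'"
      by (simp add: vec_mat_mone scheme_finite[OF scheme])
  qed
next
  case (add A B)
  then show ?case
    unfolding vec_mat_add by (blast intro: const_on_subconstituents_add)
next
  case (smult A c)
  then show ?case
    unfolding vec_mat_smult by (blast intro: const_on_subconstituents_smult)
next
  case (mult A B)
  then show ?case
    unfolding vec_mat_mmult by blast
qed

lemma mat_algebra_terwilliger: "mat_algebra X (terwilliger X S x)"
  by unfold_locales (auto intro: terwilliger.intros scheme_finite[OF scheme])

lemma terwilliger_subconstituent_sum:
  assumes "x \<in> X" "C \<in> terwilliger X S x" "s \<in> S" "(x, z) \<in> s"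
  shows "mat_vec X C (\<lambda>t. of_bool ((x, t) \<in> s)) x = of_nat (valency X s) * C x z"
proof -
  have "w = x \<longleftrightarrow> c = Id_on X" if "c \<in> S" "(x, w) \<in> c" for c w
    using scheme_rel_eqI[OF scheme that(1) scheme_Id_on[OF scheme] that(2)] that(2) assms(1) by auto
  then have "const_on_subconstituents S x (\<lambda>t. of_bool (t = x))"
    unfolding const_on_subconstituents_def by (intro ballI allI impI arg_cong[where f = of_bool]) metis
  moreover have "vec_mat X (\<lambda>t. of_bool (t = x)) C = (\<lambda>t. C x t)"
    using assms(1) scheme_finite[OF scheme] by (simp add: vec_mat_def)
  ultimately have row: "const_on_subconstituents S x (\<lambda>t. C x t)"
    using vec_mat_terwilliger_const[OF assms(2)] by metis
  have "{t. (x, t) \<in> s} \<subseteq> X"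
    using scheme_rel_subset[OF scheme assms(3)] by blast
  then have "mat_vec X C (\<lambda>t. of_bool ((x, t) \<in> s)) x = sum (\<lambda>t. C x t) {t. (x, t) \<in> s}"
    by (simp add: mat_vec_def Int_absorb1 scheme_finite[OF scheme])
  also have "\<dots> = of_nat (card {t. (x, t) \<in> s}) * C x z"
    by (rule sum_const_on_subconstituent[OF row assms(3,4)]) simp
  finally show ?thesis
    by (simp add: card_eq_valency[OF scheme assms(3,1)])
qed

lemma rank_one_mem_terwilliger:
  assumes "x \<in> X" "s \<in> S"
  shows "(\<lambda>y z. of_bool ((x, y) \<in> s) * of_bool (z = x)) \<in> terwilliger X S x"
proof -
  have "(\<lambda>y z. of_bool ((x, y) \<in> s) * of_bool (z = x)) =
      mmult X (mmult X (dual_idem x s) (adj_mat (converse s))) (dual_idem x (Id_on X))"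
    using scheme_rel_subset[OF scheme assms(2)] assms(1)
    by (auto simp: fun_eq_iff dual_idem_adj_mat_dual_idem scheme_finite[OF scheme])
  also have "\<dots> \<in> terwilliger X S x"
    using assms(2) scheme_converse[OF scheme assms(2)] scheme_Id_on[OF scheme]
    by (rule terwilliger.gen)
  finally show ?thesis .
qed

end

theorem theorem3p4:
  fixes X :: "'a set" and S :: "('a \<times> 'a) set set" and x :: 'a and p :: nat
    and K :: "'k::field itself"
  assumes "assoc_scheme X S"
    and "x \<in> X"
    and "CHAR('k) = p" and "p > 0"
    and "\<exists>s\<in>S. p dvd valency X s"
  shows "\<not> mat_semisimple X (terwilliger X S x :: ('a \<Rightarrow> 'a \<Rightarrow> 'k) set)"
proof -
  obtain s where s: "s \<in> S" and "p dvd valency X s"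
    using assms(5) by blast
  then have valency_eq_0: "of_nat (valency X s) = (0 :: 'k)"
    using assms(3) by (simp add: of_nat_eq_0_iff_char_dvd)
  obtain z where "(x, z) \<in> s"
    using valency_pos[OF assms(1) s] card_eq_valency[OF assms(1) s assms(2)] by fastforce
  interpret mat_algebra X "terwilliger X S x :: ('a \<Rightarrow> 'a \<Rightarrow> 'k) set"
    by (rule mat_algebra_terwilliger[OF assms(1)])
  have "(\<Sum>t\<in>X. of_bool (t = x) * mat_vec X C (\<lambda>t. of_bool ((x, t) \<in> s)) t) = 0"
    if "C \<in> terwilliger X S x" for C :: "'a \<Rightarrow> 'a \<Rightarrow> 'k"
    using terwilliger_subconstituent_sum[OF assms(1,2) that s \<open>(x, z) \<in> s\<close>] assms(2)
    by (simp add: finite_X valency_eq_0)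
  then show ?thesis
    using rank_one_mem_terwilliger[OF assms(1,2) s] \<open>(x, z) \<in> s\<close>
      scheme_rel_subset[OF assms(1) s] assms(2)
    by (intro not_mat_semisimple_if_rank_one_orth[where y = z and z = x]) auto
qed

end
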